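(* There is an absolute constant $C$ such that for all integers $1\le k<d$ and $n\ge1$ and every $B\in\mathbb R^{n\times d}$, there exist $k$ distinct standard basis vectors of $\mathbb R^d$ such that the matrix $P\in\mathbb R^{d\times k}$ having them as columns satisfies \[\|B-(BP)(BP)^\dagger B\|_F^2\le C\,kd\,\|B-[B]_k\|_F^2.\]
   Context: $M^\dagger$ denotes the Moore–Penrose pseudo-inverse, and $[B]_k$ denotes a best approximation of $B$ of rank at most $k$ in Frobenius norm. *)

theory Defs
  imports Complex_Main "Jordan_Normal_Form.DL_Rank"
begin

definition frob_sq :: "real mat \<Rightarrow> real" where
  "frob_sq A = (\<Sum>i<dim_row A. \<Sum>j<dim_col A. (A $$ (i, j))\<^sup>2)"

definition is_pinv :: "real mat \<Rightarrow> real mat \<Rightarrow> bool" where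
  "is_pinv M X \<longleftrightarrow> X \<in> carrier_mat (dim_col M) (dim_row M)
     \<and> M * X * M = M \<and> X * M * X = X
     \<and> transpose_mat (M * X) = M * X \<and> transpose_mat (X * M) = X * M"

definition pinv :: "real mat \<Rightarrow> real mat" where
  "pinv M = (THE X. is_pinv M X)"

definition mrank :: "real mat \<Rightarrow> nat" where
  "mrank A = vec_space.rank (dim_row A) A"

text \<open>Squared Frobenius error of a best rank-at-most-k approximation:
  the value of the minimisation problem defining [B]_k.\<close>
definition best_rank_err :: "real mat \<Rightarrow> nat \<Rightarrow> real" where
  "best_rank_err B k = Inf {frob_sq (B - A) | A.
      A \<in> carrier_mat (dim_row B) (dim_col B) \<and> mrank A \<le> k}"

end

theory Submission
  imports Defs
begin

text \<open>
  Fix any A of rank at most k. Among the column selections of A with nonzero Gram determinant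
  take one of maximal size r \<le> k and, for that size, of maximal absolute Gram determinant
  (a maximal-volume basis of the column space of A). Replacing one selected column by another
  column multiplies the Gram determinant by the square of the corresponding Cramer coefficient,
  so every column of A is a combination of the selected ones with coefficients bounded by 1 in
  absolute value. Applying the same coefficients to the same columns of B, the residual entries
  are e_ij - \<Sum>_l e_i\<sigma>(l) c_jl with e = B - A, whence the residual has squared Frobenius norm
  at most 2(1 + kd) |B - A|^2 \<le> 4kd |B - A|^2. After padding the selection to k distinct columns,
  the orthogonal projection (BP)(BP)^+ B is at least as good as any BPY. Minimising over the
  finitely many selections and taking the infimum over A gives C = 4.

  The pseudo-inverse is obtained from a full-rank factorisation M = FG as
  G^T (G G^T)^-1 (F^T F)^-1 F^T, the factor F again consisting of maximally selected columns.
\<close>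

lemma square_sum_le_card_mult_sum_squares:
  fixes a :: "'b \<Rightarrow> real"
  assumes "finite S"
  shows "(\<Sum>l\<in>S. a l)\<^sup>2 \<le> real (card S) * (\<Sum>l\<in>S. (a l)\<^sup>2)"
proof -
  have "0 \<le> (\<Sum>l\<in>S. \<Sum>m\<in>S. (a l - a m)\<^sup>2)" by (intro sum_nonneg) auto
  also have "\<dots> = (\<Sum>l\<in>S. \<Sum>m\<in>S. (a l)\<^sup>2 + (a m)\<^sup>2 - 2 * (a l * a m))"
    by (simp add: power2_diff mult.assoc)
  also have "\<dots> = 2 * (real (card S) * (\<Sum>l\<in>S. (a l)\<^sup>2)) - 2 * (\<Sum>l\<in>S. a l)\<^sup>2"
    by (simp add: sum_subtractf sum.distrib sum_distrib_left sum_distrib_right power2_eq_square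
        sum_constant algebra_simps)
  finally show ?thesis by simp
qed

lemma finite_obtain_max:
  fixes f :: "'a \<Rightarrow> 'b :: linorder"
  assumes "finite S" "S \<noteq> {}"
  obtains x where "x \<in> S" "\<And>y. y \<in> S \<Longrightarrow> f y \<le> f x"
proof -
  have "Max (f ` S) \<in> f ` S" using assms by simp
  then obtain x where "x \<in> S" "f x = Max (f ` S)" by auto
  then show ?thesis using that assms by simp
qed

lemma index_mult_mat_sum:
  fixes M N :: "'a :: semiring_0 mat"
  assumes "M \<in> carrier_mat n m" "N \<in> carrier_mat m p" "i < n" "j < p"
  shows "(M * N) $$ (i, j) = (\<Sum>l<m. M $$ (i, l) * N $$ (l, j))"
  using assms by (simp add: scalar_prod_def lessThan_atLeast0)

lemma index_mult_mat_vec_sum: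
  fixes M :: "'a :: semiring_0 mat"
  assumes "M \<in> carrier_mat n m" "v \<in> carrier_vec m" "i < n"
  shows "(M *\<^sub>v v) $ i = (\<Sum>l<m. M $$ (i, l) * v $ l)"
  using assms by (simp add: scalar_prod_def lessThan_atLeast0)

lemma frob_sq_nonneg: "0 \<le> frob_sq A"
  unfolding frob_sq_def by (intro sum_nonneg) auto

section \<open>Column selections\<close>

definition select_cols :: "'a mat \<Rightarrow> nat \<Rightarrow> (nat \<Rightarrow> nat) \<Rightarrow> 'a mat" where
  "select_cols A r \<sigma> = mat (dim_row A) r (\<lambda>(i, l). A $$ (i, \<sigma> l))"

lemma select_cols_dims [simp]:
  "dim_row (select_cols A r \<sigma>) = dim_row A" "dim_col (select_cols A r \<sigma>) = r"
  by (simp_all add: select_cols_def)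

lemma select_cols_index [simp]:
  "i < dim_row A \<Longrightarrow> l < r \<Longrightarrow> select_cols A r \<sigma> $$ (i, l) = A $$ (i, \<sigma> l)"
  by (simp add: select_cols_def)

lemma select_cols_carrier_mat: "A \<in> carrier_mat n d \<Longrightarrow> select_cols A r \<sigma> \<in> carrier_mat n r"
  unfolding carrier_mat_def by simp

definition sel_mat :: "nat \<Rightarrow> nat \<Rightarrow> (nat \<Rightarrow> nat) \<Rightarrow> 'a :: {zero, one} mat" where
  "sel_mat d k s = mat d k (\<lambda>(m, l). if m = s l then 1 else 0)"

lemma sel_mat_carrier_mat: "sel_mat d k s \<in> carrier_mat d k"
  by (simp add: sel_mat_def)

lemma col_sel_mat: "j < k \<Longrightarrow> s j < d \<Longrightarrow> col (sel_mat d k s) j = unit_vec d (s j)"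
  by (rule eq_vecI) (auto simp: sel_mat_def)

lemma sel_mat_restrict: "sel_mat d k (restrict s {..<k}) = sel_mat d k s"
  by (rule eq_matI) (auto simp: sel_mat_def)

lemma mult_sel_mat:
  fixes A :: "'a :: semiring_1 mat"
  assumes A: "A \<in> carrier_mat n d" and s: "s ` {..<k} \<subseteq> {..<d}"
  shows "A * sel_mat d k s = select_cols A k s"
proof (rule eq_matI)
  fix i l assume "i < dim_row (select_cols A k s)" "l < dim_col (select_cols A k s)"
  then have i: "i < n" and l: "l < k" using A by auto
  have "(A * sel_mat d k s) $$ (i, l) = (\<Sum>m<d. A $$ (i, m) * sel_mat d k s $$ (m, l))"
    by (rule index_mult_mat_sum[OF A sel_mat_carrier_mat i l])
  also have "\<dots> = (\<Sum>m<d. if m = s l then A $$ (i, m) else 0)"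
    using l by (intro sum.cong refl) (simp add: sel_mat_def)
  also have "\<dots> = A $$ (i, s l)" using s l by (auto simp: sum.delta)
  finally show "(A * sel_mat d k s) $$ (i, l) = select_cols A k s $$ (i, l)"
    using A i l by simp
qed (use A in \<open>simp_all add: sel_mat_def\<close>)

section \<open>Gram determinants of column selections\<close>

abbreviation gram_det :: "real mat \<Rightarrow> nat \<Rightarrow> (nat \<Rightarrow> nat) \<Rightarrow> real" where
  "gram_det A r \<sigma> \<equiv> det (transpose_mat (select_cols A r \<sigma>) * select_cols A r \<sigma>)"

lemma gram_mult_vec_eq_0_imp_mult_vec_eq_0:
  fixes F :: "real mat"
  assumes F: "F \<in> carrier_mat n r" and v: "v \<in> carrier_vec r"
    and z: "(transpose_mat F * F) *\<^sub>v v = 0\<^sub>v r"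
  shows "F *\<^sub>v v = 0\<^sub>v n"
proof -
  define w where "w = F *\<^sub>v v"
  have w: "w \<in> carrier_vec n" using F v by (simp add: w_def)
  have "transpose_mat F *\<^sub>v w = 0\<^sub>v r" using z F v by (simp add: w_def)
  then have "0 = (\<Sum>l<r. v $ l * (transpose_mat F *\<^sub>v w) $ l)" by simp
  also have "\<dots> = (\<Sum>l<r. v $ l * (\<Sum>i<n. F $$ (i, l) * w $ i))"
    using F w by (intro sum.cong refl) (simp add: scalar_prod_def row_transpose lessThan_atLeast0)
  also have "\<dots> = (\<Sum>i<n. w $ i * (\<Sum>l<r. F $$ (i, l) * v $ l))"
    by (simp add: sum_distrib_left sum_distrib_right mult_ac sum.swap[of _ "{..<r}"])
  also have "\<dots> = (\<Sum>i<n. (w $ i)\<^sup>2)"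
    using F v by (intro sum.cong refl) (simp add: w_def scalar_prod_def power2_eq_square lessThan_atLeast0)
  finally have "(\<Sum>i<n. (w $ i)\<^sup>2) = 0" by simp
  then have "\<forall>i\<in>{..<n}. (w $ i)\<^sup>2 = 0" by (subst sum_nonneg_eq_0_iff[symmetric]) auto
  then show ?thesis using w by (intro eq_vecI) (auto simp: w_def[symmetric])
qed

lemma det_gram_nonzero_iff:
  fixes F :: "real mat"
  assumes F: "F \<in> carrier_mat n r"
  shows "det (transpose_mat F * F) \<noteq> 0 \<longleftrightarrow> (\<forall>v\<in>carrier_vec r. F *\<^sub>v v = 0\<^sub>v n \<longrightarrow> v = 0\<^sub>v r)"
proof -
  have "transpose_mat F * F \<in> carrier_mat r r" using F by simp
  then have det0: "det (transpose_mat F * F) = 0 \<longleftrightarrow>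
      (\<exists>v. v \<in> carrier_vec r \<and> v \<noteq> 0\<^sub>v r \<and> (transpose_mat F * F) *\<^sub>v v = 0\<^sub>v r)"
    by (rule det_0_iff_vec_prod_zero_field)
  have "(transpose_mat F * F) *\<^sub>v v = 0\<^sub>v r" if v: "v \<in> carrier_vec r" and "F *\<^sub>v v = 0\<^sub>v n" for v
  proof -
    have "(transpose_mat F * F) *\<^sub>v v = transpose_mat F *\<^sub>v (F *\<^sub>v v)" using F v by simp
    then show ?thesis using F that by auto
  qed
  then show ?thesis using det0 gram_mult_vec_eq_0_imp_mult_vec_eq_0[OF F] by blast
qed

lemma gram_det_eq_0_if_cols_eq:
  fixes A :: "real mat"
  assumes A: "A \<in> carrier_mat n d" and ab: "a < r" "b < r" "a \<noteq> b"
    and eq: "\<forall>i<n. A $$ (i, \<sigma> a) = A $$ (i, \<sigma> b)"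
  shows "gram_det A r \<sigma> = 0"
proof -
  let ?F = "select_cols A r \<sigma>"
  have F: "?F \<in> carrier_mat n r" using A by (rule select_cols_carrier_mat)
  have nA: "dim_row A = n" using A by (rule carrier_matD)
  define v :: "real vec" where "v = vec r (\<lambda>l. (if l = a then 1 else 0) - (if l = b then 1 else 0))"
  have v: "v \<in> carrier_vec r" by (simp add: v_def)
  have "v \<noteq> 0\<^sub>v r"
  proof
    assume "v = 0\<^sub>v r"
    then have "v $ a = 0" using ab by simp
    then show False using ab by (simp add: v_def)
  qed
  moreover have "?F *\<^sub>v v = 0\<^sub>v n"
  proof (rule eq_vecI)
    fix i assume "i < dim_vec (0\<^sub>v n)"
    then have i: "i < n" by simp
    have "(?F *\<^sub>v v) $ i = (\<Sum>l<r. ?F $$ (i, l) * v $ l)" by (rule index_mult_mat_vec_sum[OF F v i])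
    also have "\<dots> = (\<Sum>l<r. (if l = a then A $$ (i, \<sigma> l) else 0) - (if l = b then A $$ (i, \<sigma> l) else 0))"
      using nA i by (intro sum.cong refl) (simp add: v_def algebra_simps)
    also have "\<dots> = A $$ (i, \<sigma> a) - A $$ (i, \<sigma> b)"
      using ab by (simp add: sum_subtractf sum.delta)
    also have "\<dots> = 0" using eq i by simp
    finally show "(?F *\<^sub>v v) $ i = 0\<^sub>v n $ i" using i by simp
  qed (use nA in simp)
  ultimately show ?thesis using det_gram_nonzero_iff[OF F] v by blast
qed

lemma inj_on_if_gram_det_nonzero:
  fixes A :: "real mat"
  assumes "A \<in> carrier_mat n d" and "gram_det A r \<sigma> \<noteq> 0"
  shows "inj_on \<sigma> {..<r}"
proof (rule inj_onI, rule ccontr)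
  fix a b assume "a \<in> {..<r}" "b \<in> {..<r}" "\<sigma> a = \<sigma> b" "a \<noteq> b"
  then show False using gram_det_eq_0_if_cols_eq[OF assms(1), of a r b \<sigma>] assms(2) by auto
qed

lemma distinct_cols_select_cols_if_gram_det_nonzero:
  fixes A :: "real mat"
  assumes A: "A \<in> carrier_mat n d" and g: "gram_det A m \<sigma> \<noteq> 0"
  shows "distinct (cols (select_cols A m \<sigma>))"
proof (rule distinct_conv_nth[THEN iffD2], intro allI impI)
  have nA: "dim_row A = n" using A by (rule carrier_matD)
  fix a b assume "a < length (cols (select_cols A m \<sigma>))" "b < length (cols (select_cols A m \<sigma>))"
    and ab: "a \<noteq> b"
  then have a: "a < m" and b: "b < m" by auto
  show "cols (select_cols A m \<sigma>) ! a \<noteq> cols (select_cols A m \<sigma>) ! b"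
  proof
    assume "cols (select_cols A m \<sigma>) ! a = cols (select_cols A m \<sigma>) ! b"
    then have "\<forall>i<n. A $$ (i, \<sigma> a) = A $$ (i, \<sigma> b)"
      using a b nA by (metis cols_length cols_nth index_col select_cols_dims select_cols_index)
    then show False using gram_det_eq_0_if_cols_eq[OF A a b ab] g by simp
  qed
qed

lemma le_rank_if_gram_det_nonzero:
  fixes A :: "real mat"
  assumes A: "A \<in> carrier_mat n d" and g: "gram_det A m \<sigma> \<noteq> 0" and sig: "\<sigma> ` {..<m} \<subseteq> {..<d}"
  shows "m \<le> vec_space.rank n A"
proof -
  let ?F = "select_cols A m \<sigma>"
  have F: "?F \<in> carrier_mat n m" using A by (rule select_cols_carrier_mat)
  have dist: "distinct (cols ?F)" by (rule distinct_cols_select_cols_if_gram_det_nonzero[OF A g])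
  have indpt: "\<not> module.lin_dep class_ring (module_vec TYPE(real) n) (set (cols ?F))"
  proof
    assume "module.lin_dep class_ring (module_vec TYPE(real) n) (set (cols ?F))"
    then obtain v where "v \<in> carrier_vec m" "v \<noteq> 0\<^sub>v m" "?F *\<^sub>v v = 0\<^sub>v n"
      using vec_space.lin_depE[OF F _ dist] by blast
    then show False using det_gram_nonzero_iff[OF F] g by blast
  qed
  have "col ?F l \<in> set (cols A)" if "l < m" for l
  proof -
    have "col ?F l = col A (\<sigma> l)" using that A by (intro eq_vecI) (auto simp: col_def)
    moreover have "\<sigma> l < d" using sig that by auto
    ultimately show ?thesis using A by (auto simp: in_set_conv_nth)
  qed
  then have "set (cols ?F) \<subseteq> set (cols A)" by (auto simp: in_set_conv_nth)
  then have "card (set (cols ?F)) \<le> vec_space.rank n A"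
    by (rule vec_space.rank_ge_card_indpt[OF A _ indpt])
  then show ?thesis using distinct_card[OF dist] by simp
qed

lemma lincomb_if_gram_det_extension_eq_0:
  fixes A :: "real mat"
  assumes A: "A \<in> carrier_mat n d"
    and g: "gram_det A r \<sigma> \<noteq> 0" and g': "gram_det A (Suc r) (\<sigma>(r := j)) = 0"
  shows "\<exists>c. \<forall>i<n. A $$ (i, j) = (\<Sum>l<r. A $$ (i, \<sigma> l) * c l)"
proof -
  let ?F = "select_cols A r \<sigma>" and ?F' = "select_cols A (Suc r) (\<sigma>(r := j))"
  have nA: "dim_row A = n" using A by (rule carrier_matD)
  have F: "?F \<in> carrier_mat n r" and F': "?F' \<in> carrier_mat n (Suc r)"
    using select_cols_carrier_mat[OF A] by blast+
  obtain v where v: "v \<in> carrier_vec (Suc r)" and F'v: "?F' *\<^sub>v v = 0\<^sub>v n" and "v \<noteq> 0\<^sub>v (Suc r)"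
    using g' det_gram_nonzero_iff[OF F'] by blast
  have rel: "(\<Sum>l<r. A $$ (i, \<sigma> l) * v $ l) + A $$ (i, j) * v $ r = 0" if i: "i < n" for i
  proof -
    have "0 = (?F' *\<^sub>v v) $ i" using F'v i by simp
    also have "\<dots> = (\<Sum>l<Suc r. ?F' $$ (i, l) * v $ l)" by (rule index_mult_mat_vec_sum[OF F' v i])
    also have "\<dots> = (\<Sum>l<r. A $$ (i, \<sigma> l) * v $ l) + A $$ (i, j) * v $ r"
      using nA i by (simp add: sum.lessThan_Suc)
    finally show ?thesis by simp
  qed
  have "v $ r \<noteq> 0"
  proof
    assume vr: "v $ r = 0"
    define u where "u = vec r (\<lambda>l. v $ l)"
    have u: "u \<in> carrier_vec r" by (simp add: u_def)
    have "?F *\<^sub>v u = 0\<^sub>v n"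
    proof (rule eq_vecI)
      fix i assume "i < dim_vec (0\<^sub>v n)"
      then have i: "i < n" by simp
      have "(?F *\<^sub>v u) $ i = (\<Sum>l<r. ?F $$ (i, l) * u $ l)"
        by (rule index_mult_mat_vec_sum[OF F u i])
      also have "\<dots> = (\<Sum>l<r. A $$ (i, \<sigma> l) * v $ l)" using nA i by (simp add: u_def)
      finally show "(?F *\<^sub>v u) $ i = 0\<^sub>v n $ i" using rel[OF i] vr i by simp
    qed (use nA in simp)
    then have "u = 0\<^sub>v r" using g det_gram_nonzero_iff[OF F] u by blast
    then have "v $ l = 0" if "l < r" for l
      using that by (metis index_vec index_zero_vec(1) u_def)
    then have "v = 0\<^sub>v (Suc r)"
      using v vr by (intro eq_vecI) (auto simp: less_Suc_eq)
    with \<open>v \<noteq> 0\<^sub>v (Suc r)\<close> show False by simp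
  qed
  have "A $$ (i, j) = (\<Sum>l<r. A $$ (i, \<sigma> l) * (- v $ l / v $ r))" if i: "i < n" for i
    using rel[OF i] \<open>v $ r \<noteq> 0\<close>
    by (simp add: sum_divide_distrib[symmetric] field_simps sum_negf eq_neg_iff_add_eq_0)
  then show ?thesis by (intro exI[of _ "\<lambda>l. - v $ l / v $ r"]) simp
qed

definition id_col_replace :: "nat \<Rightarrow> nat \<Rightarrow> (nat \<Rightarrow> real) \<Rightarrow> real mat" where
  "id_col_replace r i c = mat r r (\<lambda>(a, b). if b = i then c a else if a = b then 1 else 0)"

lemma id_col_replace_carrier_mat: "id_col_replace r i c \<in> carrier_mat r r"
  by (simp add: id_col_replace_def)

lemma id_col_replace_index [simp]:
  "a < r \<Longrightarrow> b < r \<Longrightarrow>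
    id_col_replace r i c $$ (a, b) = (if b = i then c a else if a = b then 1 else 0)"
  by (simp add: id_col_replace_def)

lemma det_id_col_replace:
  assumes i: "i < r"
  shows "det (id_col_replace r i c) = c i"
proof -
  let ?E = "id_col_replace r i c"
  have "mat_delete ?E i i = 1\<^sub>m (r - 1)"
    by (rule eq_matI) (auto simp: mat_delete_def id_col_replace_def)
  then have cof: "cofactor ?E i i = 1" by (simp add: cofactor_def)
  have "det ?E = (\<Sum>b<r. ?E $$ (i, b) * cofactor ?E i b)"
    by (rule laplace_expansion_row[OF id_col_replace_carrier_mat i])
  also have "\<dots> = (\<Sum>b<r. if b = i then c i else 0)"
    using i by (intro sum.cong refl) (auto simp: cof)
  also have "\<dots> = c i" using i by simp
  finally show ?thesis .
qed

lemma select_cols_fun_upd_eq_mult: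
  fixes A :: "real mat"
  assumes A: "A \<in> carrier_mat n d" and rep: "\<forall>m<n. A $$ (m, j) = (\<Sum>l<r. A $$ (m, \<sigma> l) * c l)"
  shows "select_cols A r (\<sigma>(i := j)) = select_cols A r \<sigma> * id_col_replace r i c"
proof (rule eq_matI)
  let ?F = "select_cols A r \<sigma>" and ?E = "id_col_replace r i c"
  have nA: "dim_row A = n" using A by (rule carrier_matD)
  have F: "?F \<in> carrier_mat n r" using A by (rule select_cols_carrier_mat)
  fix m b assume "m < dim_row (?F * ?E)" "b < dim_col (?F * ?E)"
  then have m: "m < n" and b: "b < r" using F by (auto simp: id_col_replace_def)
  have "(?F * ?E) $$ (m, b) = (\<Sum>a<r. A $$ (m, \<sigma> a) * ?E $$ (a, b))"
    using nA m by (simp add: index_mult_mat_sum[OF F id_col_replace_carrier_mat m b])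
  also have "\<dots> = select_cols A r (\<sigma>(i := j)) $$ (m, b)"
  proof (cases "b = i")
    case True
    then have "(\<Sum>a<r. A $$ (m, \<sigma> a) * ?E $$ (a, b)) = (\<Sum>a<r. A $$ (m, \<sigma> a) * c a)"
      using b by (intro sum.cong refl) simp
    then show ?thesis using rep m b True nA by simp
  next
    case False
    then have "(\<Sum>a<r. A $$ (m, \<sigma> a) * ?E $$ (a, b)) = (\<Sum>a<r. if a = b then A $$ (m, \<sigma> a) else 0)"
      using b by (intro sum.cong refl) auto
    then show ?thesis using nA m b False by (simp add: sum.delta)
  qed
  finally show "select_cols A r (\<sigma>(i := j)) $$ (m, b) = (?F * ?E) $$ (m, b)" by simp
qed (use A in \<open>simp_all add: carrier_matD id_col_replace_def\<close>)

lemma gram_det_fun_upd: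
  fixes A :: "real mat"
  assumes A: "A \<in> carrier_mat n d" and i: "i < r"
    and rep: "\<forall>m<n. A $$ (m, j) = (\<Sum>l<r. A $$ (m, \<sigma> l) * c l)"
  shows "gram_det A r (\<sigma>(i := j)) = (c i)\<^sup>2 * gram_det A r \<sigma>"
proof -
  let ?F = "select_cols A r \<sigma>" and ?E = "id_col_replace r i c"
  let ?G = "transpose_mat ?F * ?F"
  have F: "?F \<in> carrier_mat n r" using A by (rule select_cols_carrier_mat)
  have E: "?E \<in> carrier_mat r r" by (rule id_col_replace_carrier_mat)
  have G: "?G \<in> carrier_mat r r" using F by simp
  have Ft: "transpose_mat ?F \<in> carrier_mat r n" and Et: "transpose_mat ?E \<in> carrier_mat r r"
    using F E by simp_all
  have "transpose_mat (?F * ?E) * (?F * ?E) = (transpose_mat ?E * transpose_mat ?F) * (?F * ?E)"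
    by (simp add: transpose_mult[OF F E])
  also have "\<dots> = transpose_mat ?E * (transpose_mat ?F * (?F * ?E))"
    by (rule assoc_mult_mat[OF Et Ft mult_carrier_mat[OF F E]])
  also have "transpose_mat ?F * (?F * ?E) = ?G * ?E"
    by (rule assoc_mult_mat[OF Ft F E, symmetric])
  finally have "gram_det A r (\<sigma>(i := j)) = det (transpose_mat ?E * (?G * ?E))"
    unfolding select_cols_fun_upd_eq_mult[OF A rep] by simp
  also have "\<dots> = det ?E * (det ?G * det ?E)"
    using det_mult[OF Et mult_carrier_mat[OF G E]] det_mult[OF G E] det_transpose[OF E] by simp
  finally show ?thesis using i by (simp add: det_id_col_replace power2_eq_square)
qed

lemma abs_coeff_le_1_if_gram_det_max:
  fixes A :: "real mat"
  assumes A: "A \<in> carrier_mat n d" and i: "i < r"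
    and max: "\<bar>gram_det A r (\<sigma>(i := j))\<bar> \<le> \<bar>gram_det A r \<sigma>\<bar>"
    and g: "gram_det A r \<sigma> \<noteq> 0"
    and rep: "\<forall>m<n. A $$ (m, j) = (\<Sum>l<r. A $$ (m, \<sigma> l) * c l)"
  shows "\<bar>c i\<bar> \<le> 1"
proof -
  have "(c i)\<^sup>2 * \<bar>gram_det A r \<sigma>\<bar> \<le> 1 * \<bar>gram_det A r \<sigma>\<bar>"
    using max unfolding gram_det_fun_upd[OF A i rep] by (simp add: abs_mult)
  then have "(c i)\<^sup>2 \<le> 1" using g by simp
  then show ?thesis by (simp add: abs_square_le_1)
qed

lemma exists_max_gram_det_selection:
  fixes A :: "real mat"
  assumes A: "A \<in> carrier_mat n d" and rk: "vec_space.rank n A \<le> k"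
  obtains r \<sigma> where "r \<le> k" "\<sigma> \<in> PiE {..<r} (\<lambda>_. {..<d})" "gram_det A r \<sigma> \<noteq> 0"
    "\<And>\<tau>. \<tau> \<in> PiE {..<r} (\<lambda>_. {..<d}) \<Longrightarrow> \<bar>gram_det A r \<tau>\<bar> \<le> \<bar>gram_det A r \<sigma>\<bar>"
    "\<And>\<tau>. \<tau> \<in> PiE {..<Suc r} (\<lambda>_. {..<d}) \<Longrightarrow> gram_det A (Suc r) \<tau> = 0"
proof -
  define R where "R = {r. r \<le> k \<and> (\<exists>\<sigma>\<in>PiE {..<r} (\<lambda>_. {..<d}). gram_det A r \<sigma> \<noteq> 0)}"
  have "finite R" unfolding R_def by (rule finite_subset[of _ "{..k}"]) auto
  have "transpose_mat (select_cols A 0 \<sigma>) * select_cols A 0 \<sigma> \<in> carrier_mat 0 0" for \<sigma>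
    using select_cols_carrier_mat[OF A, of 0 \<sigma>] by (intro mult_carrier_mat) auto
  then have "0 \<in> R" unfolding R_def by (auto simp: det_dim_zero)
  define r where "r = Max R"
  have "r \<in> R" unfolding r_def using \<open>finite R\<close> \<open>0 \<in> R\<close> by (intro Max_in) auto
  then obtain \<sigma>0 where r: "r \<le> k" and \<sigma>0: "\<sigma>0 \<in> PiE {..<r} (\<lambda>_. {..<d})" "gram_det A r \<sigma>0 \<noteq> 0"
    unfolding R_def by blast
  have extension: "gram_det A (Suc r) \<tau> = 0" if \<tau>: "\<tau> \<in> PiE {..<Suc r} (\<lambda>_. {..<d})" for \<tau>
  proof (rule ccontr)
    assume g: "gram_det A (Suc r) \<tau> \<noteq> 0"
    have "\<tau> ` {..<Suc r} \<subseteq> {..<d}" using \<tau> by (auto simp: PiE_def Pi_def)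
    then have "Suc r \<le> k" using le_rank_if_gram_det_nonzero[OF A g] rk by simp
    then have "Suc r \<in> R" unfolding R_def using \<tau> g by blast
    then show False using Max_ge[OF \<open>finite R\<close>] unfolding r_def by fastforce
  qed
  have "finite (PiE {..<r} (\<lambda>_. {..<d}))" by (intro finite_PiE) auto
  then obtain \<sigma> where \<sigma>: "\<sigma> \<in> PiE {..<r} (\<lambda>_. {..<d})"
    and max: "\<And>\<tau>. \<tau> \<in> PiE {..<r} (\<lambda>_. {..<d}) \<Longrightarrow> \<bar>gram_det A r \<tau>\<bar> \<le> \<bar>gram_det A r \<sigma>\<bar>"
    using finite_obtain_max[of _ "\<lambda>\<tau>. \<bar>gram_det A r \<tau>\<bar>"] \<sigma>0(1) by blast
  have "gram_det A r \<sigma> \<noteq> 0" using max[OF \<sigma>0(1)] \<sigma>0(2) by auto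
  then show ?thesis using that r \<sigma> max extension by blast
qed

lemma exists_bounded_lincomb_selection:
  fixes A :: "real mat"
  assumes A: "A \<in> carrier_mat n d" and rk: "vec_space.rank n A \<le> k"
  shows "\<exists>r \<sigma> c. r \<le> k \<and> \<sigma> ` {..<r} \<subseteq> {..<d} \<and> inj_on \<sigma> {..<r} \<and> gram_det A r \<sigma> \<noteq> 0 \<and>
     (\<forall>j<d. \<forall>l<r. \<bar>c j l\<bar> \<le> (1::real)) \<and>
     (\<forall>i<n. \<forall>j<d. A $$ (i, j) = (\<Sum>l<r. A $$ (i, \<sigma> l) * c j l))"
proof -
  obtain r \<sigma> where r: "r \<le> k" and \<sigma>: "\<sigma> \<in> PiE {..<r} (\<lambda>_. {..<d})" and g: "gram_det A r \<sigma> \<noteq> 0"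
    and max: "\<And>\<tau>. \<tau> \<in> PiE {..<r} (\<lambda>_. {..<d}) \<Longrightarrow> \<bar>gram_det A r \<tau>\<bar> \<le> \<bar>gram_det A r \<sigma>\<bar>"
    and extension: "\<And>\<tau>. \<tau> \<in> PiE {..<Suc r} (\<lambda>_. {..<d}) \<Longrightarrow> gram_det A (Suc r) \<tau> = 0"
    using exists_max_gram_det_selection[OF A rk] by blast
  have "\<exists>c. \<forall>i<n. A $$ (i, j) = (\<Sum>l<r. A $$ (i, \<sigma> l) * c l)" if "j < d" for j
    using \<sigma> that by (intro lincomb_if_gram_det_extension_eq_0[OF A g] extension)
      (auto simp: PiE_def Pi_def extensional_def)
  then obtain c where rep: "\<And>j. j < d \<Longrightarrow> \<forall>i<n. A $$ (i, j) = (\<Sum>l<r. A $$ (i, \<sigma> l) * c j l)"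
    by metis
  have "\<bar>c j l\<bar> \<le> 1" if "j < d" "l < r" for j l
    using \<sigma> that by (intro abs_coeff_le_1_if_gram_det_max[OF A _ max g rep])
      (auto simp: PiE_def Pi_def extensional_def)
  moreover have "\<sigma> ` {..<r} \<subseteq> {..<d}" using \<sigma> by (auto simp: PiE_def Pi_def)
  ultimately show ?thesis using r inj_on_if_gram_det_nonzero[OF A g] g rep by blast
qed

section \<open>The Moore--Penrose pseudo-inverse\<close>

lemma is_pinv_carrier_mat:
  "M \<in> carrier_mat n m \<Longrightarrow> is_pinv M X \<Longrightarrow> X \<in> carrier_mat m n"
  unfolding is_pinv_def by auto

lemma is_pinv_transpose:
  fixes M X :: "real mat"
  assumes M: "M \<in> carrier_mat n m" and X: "is_pinv M X"
  shows "is_pinv (transpose_mat M) (transpose_mat X)"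
proof -
  have Xc: "X \<in> carrier_mat m n" by (rule is_pinv_carrier_mat[OF M X])
  have MX: "M * X \<in> carrier_mat n n" and XM: "X * M \<in> carrier_mat m m" using M Xc by simp_all
  have "transpose_mat M * transpose_mat X = transpose_mat (X * M)"
    and "transpose_mat X * transpose_mat M = transpose_mat (M * X)"
    using transpose_mult[OF Xc M] transpose_mult[OF M Xc] by simp_all
  moreover have "transpose_mat (X * M) * transpose_mat M = transpose_mat (M * X * M)"
    and "transpose_mat (M * X) * transpose_mat X = transpose_mat (X * M * X)"
    using transpose_mult[OF M XM] transpose_mult[OF Xc MX] assoc_mult_mat[OF M Xc M]
      assoc_mult_mat[OF Xc M Xc] by simp_all
  ultimately show ?thesis using X Xc unfolding is_pinv_def by simp
qed

lemma is_pinv_mult_eq: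
  fixes M X Y :: "real mat"
  assumes M: "M \<in> carrier_mat n m" and X: "is_pinv M X" and Y: "is_pinv M Y"
  shows "M * X = M * Y"
proof -
  have Xc: "X \<in> carrier_mat m n" and Yc: "Y \<in> carrier_mat m n"
    using is_pinv_carrier_mat[OF M] X Y by blast+
  have MY: "M * Y \<in> carrier_mat n n" using M Yc by simp
  have "transpose_mat M = transpose_mat (M * Y * M)" using Y unfolding is_pinv_def by simp
  also have "\<dots> = transpose_mat M * (M * Y)"
    using transpose_mult[OF MY M] Y unfolding is_pinv_def by simp
  finally have Mt: "transpose_mat M = transpose_mat M * (M * Y)" .
  have MXt: "M * X = transpose_mat X * transpose_mat M"
    using transpose_mult[OF M Xc] X unfolding is_pinv_def by simp
  also have "\<dots> = (transpose_mat X * transpose_mat M) * (M * Y)"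
    by (subst Mt) (use assoc_mult_mat[of "transpose_mat X" n m "transpose_mat M" n "M * Y" n] Xc M MY in simp)
  also have "\<dots> = (M * X) * (M * Y)" by (simp only: MXt[symmetric])
  also have "(M * X) * (M * Y) = M * Y"
    using assoc_mult_mat[OF M Xc MY] assoc_mult_mat[OF mult_carrier_mat[OF M Xc] M Yc] X
    unfolding is_pinv_def by simp
  finally show ?thesis .
qed

lemma is_pinv_unique:
  fixes M X Y :: "real mat"
  assumes M: "M \<in> carrier_mat n m" and X: "is_pinv M X" and Y: "is_pinv M Y"
  shows "X = Y"
proof -
  have Xc: "X \<in> carrier_mat m n" and Yc: "Y \<in> carrier_mat m n"
    using is_pinv_carrier_mat[OF M] X Y by blast+
  have "transpose_mat M * transpose_mat X = transpose_mat M * transpose_mat Y"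
    using is_pinv_mult_eq[of "transpose_mat M" m n] M is_pinv_transpose[OF M] X Y by simp
  then have XM: "X * M = Y * M" using transpose_mult[OF Xc M] transpose_mult[OF Yc M]
    by (metis transpose_transpose)
  have "X = (X * M) * X" using X unfolding is_pinv_def by simp
  also have "\<dots> = X * (M * Y)" using assoc_mult_mat[OF Xc M Xc] is_pinv_mult_eq[OF M X Y] by simp
  also have "\<dots> = (Y * M) * Y" using assoc_mult_mat[OF Xc M Yc] XM by simp
  also have "\<dots> = Y" using Y unfolding is_pinv_def by simp
  finally show ?thesis .
qed

lemma exists_inverse_mat_if_det_nonzero:
  fixes S :: "real mat"
  assumes "S \<in> carrier_mat r r" and "det S \<noteq> 0"
  shows "\<exists>W. W \<in> carrier_mat r r \<and> S * W = 1\<^sub>m r \<and> W * S = 1\<^sub>m r"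
proof -
  have "S \<in> Units (ring_mat TYPE(real) r ())" by (rule det_non_zero_imp_unit[OF assms])
  then show ?thesis unfolding Units_def ring_mat_def by auto
qed

lemma transpose_inverse_of_symmetric:
  fixes S W :: "real mat"
  assumes S: "S \<in> carrier_mat r r" and W: "W \<in> carrier_mat r r"
    and SW: "S * W = 1\<^sub>m r" and WS: "W * S = 1\<^sub>m r" and sym: "transpose_mat S = S"
  shows "transpose_mat W = W"
proof -
  have Wt: "transpose_mat W \<in> carrier_mat r r" using W by simp
  have "transpose_mat W = transpose_mat W * (S * W)" using SW Wt by simp
  also have "\<dots> = (transpose_mat W * S) * W" using assoc_mult_mat[OF Wt S W] by simp
  also have "transpose_mat W * S = transpose_mat (S * W)"
    using transpose_mult[OF S W] sym by simp
  finally show ?thesis using SW W by simp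
qed

lemma is_pinv_full_rank_factorization:
  fixes F G W V :: "real mat"
  assumes F: "F \<in> carrier_mat n r" and G: "G \<in> carrier_mat r m"
    and W: "W \<in> carrier_mat r r" and WF: "W * (transpose_mat F * F) = 1\<^sub>m r" and Wsym: "transpose_mat W = W"
    and V: "V \<in> carrier_mat r r" and GV: "(G * transpose_mat G) * V = 1\<^sub>m r" and Vsym: "transpose_mat V = V"
  shows "is_pinv (F * G) (transpose_mat G * (V * (W * transpose_mat F)))"
proof -
  let ?M = "F * G" and ?L = "W * transpose_mat F" and ?X = "transpose_mat G * (V * (W * transpose_mat F))"
  have Ft: "transpose_mat F \<in> carrier_mat r n" and Gt: "transpose_mat G \<in> carrier_mat m r"
    using F G by simp_all
  have L: "?L \<in> carrier_mat r n" and VL: "V * ?L \<in> carrier_mat r n" and M: "?M \<in> carrier_mat n m"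
    using W V Ft F G by simp_all
  have X: "?X \<in> carrier_mat m n" using Gt VL by simp
  have GX: "G * ?X = ?L"
  proof -
    have "G * ?X = ((G * transpose_mat G) * V) * ?L"
      using assoc_mult_mat[OF G Gt VL] assoc_mult_mat[OF mult_carrier_mat[OF G Gt] V L] by simp
    then show ?thesis using GV left_mult_one_mat[OF L] by simp
  qed
  have LM: "?L * ?M = G"
  proof -
    have "?L * ?M = (W * (transpose_mat F * F)) * G"
      using assoc_mult_mat[OF W Ft M] assoc_mult_mat[OF Ft F G] assoc_mult_mat[OF W mult_carrier_mat[OF Ft F] G]
      by simp
    then show ?thesis using WF G by simp
  qed
  have MX: "?M * ?X = F * ?L" using assoc_mult_mat[OF F G X] GX by simp
  have XM: "?X * ?M = transpose_mat G * (V * G)"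
    using assoc_mult_mat[OF Gt VL M] assoc_mult_mat[OF V L M] LM by simp
  have "?M * ?X * ?M = ?M"
    using MX assoc_mult_mat[OF F L M] LM by simp
  moreover have "?X * ?M * ?X = ?X"
    using XM assoc_mult_mat[OF Gt mult_carrier_mat[OF V G] X] assoc_mult_mat[OF V G X] GX by simp
  moreover have "transpose_mat (?M * ?X) = ?M * ?X"
    using MX transpose_mult[OF F L] transpose_mult[OF W Ft] Wsym assoc_mult_mat[OF F W Ft] by simp
  moreover have "transpose_mat (?X * ?M) = ?X * ?M"
    using XM transpose_mult[OF Gt mult_carrier_mat[OF V G]] transpose_mult[OF V G] Vsym
      assoc_mult_mat[OF Gt V G] by simp
  ultimately show ?thesis unfolding is_pinv_def using X F G by simp
qed

lemma det_mult_transpose_nonzero_if_right_inverse: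
  fixes G P :: "real mat"
  assumes G: "G \<in> carrier_mat r m" and P: "P \<in> carrier_mat m r" and GP: "G * P = 1\<^sub>m r"
  shows "det (G * transpose_mat G) \<noteq> 0"
proof -
  have "v = 0\<^sub>v r" if v: "v \<in> carrier_vec r" and "transpose_mat G *\<^sub>v v = 0\<^sub>v m" for v
  proof -
    have "v = transpose_mat (G * P) *\<^sub>v v" using GP v by simp
    also have "\<dots> = transpose_mat P *\<^sub>v (transpose_mat G *\<^sub>v v)"
      using transpose_mult[OF G P] P G v by simp
    finally show ?thesis using that P by auto
  qed
  then show ?thesis using det_gram_nonzero_iff[of "transpose_mat G" m r] G by simp
qed

lemma exists_full_rank_factorization:
  fixes M :: "real mat"
  assumes M: "M \<in> carrier_mat n m"
  obtains r F G where "F \<in> carrier_mat n r" "G \<in> carrier_mat r m" "M = F * G"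
    "det (transpose_mat F * F) \<noteq> 0" "det (G * transpose_mat G) \<noteq> 0"
proof -
  obtain r \<sigma> c where sig: "\<sigma> ` {..<r} \<subseteq> {..<m}" and g: "gram_det M r \<sigma> \<noteq> 0"
    and rep: "\<forall>i<n. \<forall>j<m. M $$ (i, j) = (\<Sum>l<r. M $$ (i, \<sigma> l) * c j l)"
    using exists_bounded_lincomb_selection[OF M vec_space.rank_le_nc[OF M]] by blast
  define F where "F = select_cols M r \<sigma>"
  define P :: "real mat" where "P = sel_mat m r \<sigma>"
  have F: "F \<in> carrier_mat n r" unfolding F_def using M by (rule select_cols_carrier_mat)
  have Ft: "transpose_mat F \<in> carrier_mat r n" using F by simp
  have P: "P \<in> carrier_mat m r" unfolding P_def by (rule sel_mat_carrier_mat)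
  have MP: "M * P = F" unfolding P_def F_def by (rule mult_sel_mat[OF M sig])
  define C where "C = mat r m (\<lambda>(l, j). c j l)"
  have C: "C \<in> carrier_mat r m" by (simp add: C_def)
  have MFC: "M = F * C"
  proof (rule eq_matI)
    fix i j assume "i < dim_row (F * C)" "j < dim_col (F * C)"
    then have i: "i < n" and j: "j < m" using F C by auto
    have "(F * C) $$ (i, j) = (\<Sum>l<r. F $$ (i, l) * C $$ (l, j))" by (rule index_mult_mat_sum[OF F C i j])
    also have "\<dots> = M $$ (i, j)" using M rep i j by (simp add: F_def C_def)
    finally show "M $$ (i, j) = (F * C) $$ (i, j)" by simp
  qed (use M F C in auto)
  obtain W where W: "W \<in> carrier_mat r r" and WF: "W * (transpose_mat F * F) = 1\<^sub>m r"
    using exists_inverse_mat_if_det_nonzero[of "transpose_mat F * F" r] F g unfolding F_def by auto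
  define G where "G = W * (transpose_mat F * M)"
  have G: "G \<in> carrier_mat r m" unfolding G_def using W Ft M by simp
  have "F * G = M"
  proof -
    have "G = (W * (transpose_mat F * F)) * C"
      unfolding G_def MFC using assoc_mult_mat[OF Ft F C] assoc_mult_mat[OF W mult_carrier_mat[OF Ft F] C]
      by simp
    then show ?thesis using WF C MFC by simp
  qed
  moreover have "G * P = 1\<^sub>m r"
    unfolding G_def using assoc_mult_mat[OF W mult_carrier_mat[OF Ft M] P] assoc_mult_mat[OF Ft M P] MP WF
    by simp
  then have "det (G * transpose_mat G) \<noteq> 0" by (rule det_mult_transpose_nonzero_if_right_inverse[OF G P])
  ultimately show ?thesis using that F G g unfolding F_def by metis
qed

lemma is_pinv_pinv:
  fixes M :: "real mat"
  assumes M: "M \<in> carrier_mat n m"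
  shows "is_pinv M (pinv M)"
proof -
  obtain r F G where F: "F \<in> carrier_mat n r" and G: "G \<in> carrier_mat r m" and MFG: "M = F * G"
    and dF: "det (transpose_mat F * F) \<noteq> 0" and dG: "det (G * transpose_mat G) \<noteq> 0"
    using exists_full_rank_factorization[OF M] .
  have symF: "transpose_mat (transpose_mat F * F) = transpose_mat F * F"
    using transpose_mult[of "transpose_mat F" r n F r] F by simp
  have symG: "transpose_mat (G * transpose_mat G) = G * transpose_mat G"
    using transpose_mult[of G r m "transpose_mat G" r] G by simp
  obtain W where "W \<in> carrier_mat r r" "W * (transpose_mat F * F) = 1\<^sub>m r" "transpose_mat W = W"
    using exists_inverse_mat_if_det_nonzero[OF _ dF] transpose_inverse_of_symmetric[OF _ _ _ _ symF] F
    by (metis mult_carrier_mat transpose_carrier_mat)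
  moreover obtain V where "V \<in> carrier_mat r r" "(G * transpose_mat G) * V = 1\<^sub>m r" "transpose_mat V = V"
    using exists_inverse_mat_if_det_nonzero[OF _ dG] transpose_inverse_of_symmetric[OF _ _ _ _ symG] G
    by (metis mult_carrier_mat transpose_carrier_mat)
  ultimately have "\<exists>X. is_pinv M X"
    unfolding MFG using is_pinv_full_rank_factorization[OF F G] by blast
  then show ?thesis unfolding pinv_def using is_pinv_unique[OF M] by (metis theI)
qed

lemma index_transpose_mult_diag:
  fixes C D :: "real mat"
  assumes C: "C \<in> carrier_mat n d" and D: "D \<in> carrier_mat n d" and j: "j < d"
  shows "(transpose_mat C * D) $$ (j, j) = (\<Sum>i<n. C $$ (i, j) * D $$ (i, j))"
  using index_mult_mat_sum[of "transpose_mat C" d n D d j j] C D j by simp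

lemma frob_sq_add_orthogonal:
  fixes U V :: "real mat"
  assumes U: "U \<in> carrier_mat n d" and V: "V \<in> carrier_mat n d"
    and orth: "\<And>j. j < d \<Longrightarrow> (\<Sum>i<n. U $$ (i, j) * V $$ (i, j)) = 0"
  shows "frob_sq (U + V) = frob_sq U + frob_sq V"
proof -
  have dims: "dim_row U = n" "dim_col U = d" "dim_row V = n" "dim_col V = d"
    "dim_row (U + V) = n" "dim_col (U + V) = d"
    using U V by auto
  have "frob_sq (U + V) = (\<Sum>i<n. \<Sum>j<d. (U $$ (i, j))\<^sup>2 + (V $$ (i, j))\<^sup>2 + 2 * (U $$ (i, j) * V $$ (i, j)))"
    unfolding frob_sq_def dims by (intro sum.cong refl) (simp add: dims power2_sum)
  also have "\<dots> = frob_sq U + frob_sq V + 2 * (\<Sum>j<d. \<Sum>i<n. U $$ (i, j) * V $$ (i, j))"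
    unfolding frob_sq_def dims
    by (simp add: sum.distrib sum_distrib_left sum.swap[of _ "{..<d}"])
  finally show ?thesis using orth by simp
qed

lemma pinv_residual_orthogonal:
  fixes M B W :: "real mat"
  assumes M: "M \<in> carrier_mat n k" and B: "B \<in> carrier_mat n d" and W: "W \<in> carrier_mat k d"
    and j: "j < d"
  shows "(\<Sum>i<n. (B - M * pinv M * B) $$ (i, j) * (M * W) $$ (i, j)) = 0"
proof -
  let ?X = "pinv M"
  have X: "?X \<in> carrier_mat k n" and MXM: "M * ?X * M = M" and Hsym: "transpose_mat (M * ?X) = M * ?X"
    using is_pinv_pinv[OF M] M unfolding is_pinv_def by auto
  define H where "H = M * ?X"
  have H: "H \<in> carrier_mat n n" unfolding H_def using M X by simp
  have HB: "H * B \<in> carrier_mat n d" and MW: "M * W \<in> carrier_mat n d" using H B M W by simp_all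
  have "transpose_mat (H * B) * (M * W) = transpose_mat B * (H * (M * W))"
    using transpose_mult[OF H B] Hsym assoc_mult_mat[of "transpose_mat B" d n H n "M * W" d] B H MW
    unfolding H_def by simp
  also have "H * (M * W) = M * W" using assoc_mult_mat[OF H M W] MXM unfolding H_def by simp
  finally have "(\<Sum>i<n. (H * B) $$ (i, j) * (M * W) $$ (i, j)) = (\<Sum>i<n. B $$ (i, j) * (M * W) $$ (i, j))"
    using index_transpose_mult_diag[OF HB MW j] index_transpose_mult_diag[OF B MW j] by simp
  moreover have "dim_row (H * B) = n" "dim_col (H * B) = d" using HB by auto
  ultimately show ?thesis unfolding H_def[symmetric]
    using j by (simp add: left_diff_distrib sum_subtractf)
qed

lemma frob_sq_pinv_residual_le:
  fixes M B Y :: "real mat"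
  assumes M: "M \<in> carrier_mat n k" and B: "B \<in> carrier_mat n d" and Y: "Y \<in> carrier_mat k d"
  shows "frob_sq (B - M * pinv M * B) \<le> frob_sq (B - M * Y)"
proof -
  have X: "pinv M \<in> carrier_mat k n" using is_pinv_carrier_mat[OF M is_pinv_pinv[OF M]] .
  define W where "W = pinv M * B - Y"
  have W: "W \<in> carrier_mat k d" unfolding W_def by (rule minus_carrier_mat[OF Y])
  have U: "B - M * pinv M * B \<in> carrier_mat n d"
    by (rule minus_carrier_mat[OF mult_carrier_mat[OF mult_carrier_mat[OF M X] B]])
  have MW: "M * W \<in> carrier_mat n d" using M W by simp
  have "M * W = M * (pinv M * B) - M * Y"
    unfolding W_def by (rule mult_minus_distrib_mat[OF M _ Y]) (use X B in simp)
  also have "M * (pinv M * B) = M * pinv M * B" by (rule assoc_mult_mat[OF M X B, symmetric])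
  finally have "B - M * Y = (B - M * pinv M * B) + M * W"
    using M Y X B by (intro eq_matI) auto
  then have "frob_sq (B - M * Y) = frob_sq (B - M * pinv M * B) + frob_sq (M * W)"
    using frob_sq_add_orthogonal[OF U MW pinv_residual_orthogonal[OF M B W]] by simp
  then show ?thesis using frob_sq_nonneg[of "M * W"] by simp
qed

section \<open>Column subset selection\<close>

lemma square_residual_le:
  fixes e c :: "nat \<Rightarrow> real"
  assumes inj: "inj_on \<sigma> {..<r}" and sig: "\<sigma> ` {..<r} \<subseteq> {..<d}" and c: "\<And>l. l < r \<Longrightarrow> \<bar>c l\<bar> \<le> 1"
  shows "(x - (\<Sum>l<r. e (\<sigma> l) * c l))\<^sup>2 \<le> 2 * x\<^sup>2 + 2 * real r * (\<Sum>m<d. (e m)\<^sup>2)"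
proof -
  have "(x - y)\<^sup>2 \<le> 2 * x\<^sup>2 + 2 * y\<^sup>2" for y :: real
  proof -
    have "2 * x\<^sup>2 + 2 * y\<^sup>2 - (x - y)\<^sup>2 = (x + y)\<^sup>2" by (simp add: power2_eq_square algebra_simps)
    then show ?thesis using zero_le_power2[of "x + y"] by linarith
  qed
  then have "(x - (\<Sum>l<r. e (\<sigma> l) * c l))\<^sup>2 \<le> 2 * x\<^sup>2 + 2 * (\<Sum>l<r. e (\<sigma> l) * c l)\<^sup>2" .
  also have "(\<Sum>l<r. e (\<sigma> l) * c l)\<^sup>2 \<le> real r * (\<Sum>l<r. (e (\<sigma> l) * c l)\<^sup>2)"
    using square_sum_le_card_mult_sum_squares[of "{..<r}"] by simp
  also have "\<dots> \<le> real r * (\<Sum>l<r. (e (\<sigma> l))\<^sup>2)"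
    using c by (intro mult_left_mono sum_mono)
      (auto simp: power_mult_distrib abs_square_le_1 intro: mult_left_le)
  also have "(\<Sum>l<r. (e (\<sigma> l))\<^sup>2) = (\<Sum>m\<in>\<sigma> ` {..<r}. (e m)\<^sup>2)"
    by (simp add: sum.reindex[OF inj])
  also have "\<dots> \<le> (\<Sum>m<d. (e m)\<^sup>2)" by (rule sum_mono2[OF _ sig]) auto
  finally show ?thesis by (simp add: mult_left_mono)
qed

lemma frob_sq_residual_bounded_lincomb_le:
  fixes A B :: "real mat"
  assumes A: "A \<in> carrier_mat n d" and B: "B \<in> carrier_mat n d"
    and inj: "inj_on \<sigma> {..<r}" and sig: "\<sigma> ` {..<r} \<subseteq> {..<d}"
    and cb: "\<forall>j<d. \<forall>l<r. \<bar>c j l\<bar> \<le> 1"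
    and rep: "\<forall>i<n. \<forall>j<d. A $$ (i, j) = (\<Sum>l<r. A $$ (i, \<sigma> l) * c j l)"
  shows "frob_sq (B - select_cols B r \<sigma> * mat r d (\<lambda>(l, j). c j l))
    \<le> 2 * (1 + real r * real d) * frob_sq (B - A)"
proof -
  define e where "e i j = B $$ (i, j) - A $$ (i, j)" for i j
  let ?F = "select_cols B r \<sigma>" and ?C = "mat r d (\<lambda>(l, j). c j l)"
  have F: "?F \<in> carrier_mat n r" using B by (rule select_cols_carrier_mat)
  have C: "?C \<in> carrier_mat r d" by simp
  have nB: "dim_row B = n" "dim_col B = d" using carrier_matD[OF B] by simp_all
  have nA: "dim_row A = n" "dim_col A = d" using carrier_matD[OF A] by simp_all
  have entry: "(B - ?F * ?C) $$ (i, j) = e i j - (\<Sum>l<r. e i (\<sigma> l) * c j l)" if i: "i < n" and j: "j < d" for i j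
  proof -
    have "(?F * ?C) $$ (i, j) = (\<Sum>l<r. ?F $$ (i, l) * ?C $$ (l, j))" by (rule index_mult_mat_sum[OF F C i j])
    also have "\<dots> = (\<Sum>l<r. B $$ (i, \<sigma> l) * c j l)" using nB i j by simp
    finally show ?thesis using rep i j nB by (simp add: e_def algebra_simps sum_subtractf)
  qed
  have "frob_sq (B - ?F * ?C) = (\<Sum>i<n. \<Sum>j<d. (e i j - (\<Sum>l<r. e i (\<sigma> l) * c j l))\<^sup>2)"
  proof -
    have dims: "dim_row (B - ?F * ?C) = n" "dim_col (B - ?F * ?C) = d" using nB by simp_all
    show ?thesis unfolding frob_sq_def dims by (intro sum.cong refl) (simp only: lessThan_iff entry)
  qed
  also have "\<dots> \<le> (\<Sum>i<n. \<Sum>j<d. 2 * (e i j)\<^sup>2 + 2 * real r * (\<Sum>m<d. (e i m)\<^sup>2))"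
    using cb by (intro sum_mono square_residual_le[OF inj sig]) auto
  also have "\<dots> = 2 * (1 + real r * real d) * (\<Sum>i<n. \<Sum>j<d. (e i j)\<^sup>2)"
    by (simp add: sum.distrib sum_distrib_left algebra_simps)
  also have "(\<Sum>i<n. \<Sum>j<d. (e i j)\<^sup>2) = frob_sq (B - A)"
    unfolding frob_sq_def e_def using nA by simp
  finally show ?thesis .
qed

lemma select_cols_mult_zero_padded:
  fixes B C :: "real mat"
  assumes B: "B \<in> carrier_mat n d" and C: "C \<in> carrier_mat r d" and "r \<le> k"
    and s: "\<And>l. l < r \<Longrightarrow> s l = \<sigma> l"
  shows "select_cols B k s * mat k d (\<lambda>(l, j). if l < r then C $$ (l, j) else 0) = select_cols B r \<sigma> * C"
proof (rule eq_matI)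
  let ?Y = "mat k d (\<lambda>(l, j). if l < r then C $$ (l, j) else 0)"
  have nB: "dim_row B = n" using B by (rule carrier_matD)
  fix i j assume "i < dim_row (select_cols B r \<sigma> * C)" "j < dim_col (select_cols B r \<sigma> * C)"
  then have i: "i < n" and j: "j < d" using nB C by auto
  have "(select_cols B k s * ?Y) $$ (i, j) = (\<Sum>l<k. select_cols B k s $$ (i, l) * ?Y $$ (l, j))"
    using B by (intro index_mult_mat_sum[OF _ _ i j]) (auto intro: select_cols_carrier_mat)
  also have "\<dots> = (\<Sum>l<k. if l < r then B $$ (i, \<sigma> l) * C $$ (l, j) else 0)"
    using nB i j s by (intro sum.cong refl) auto
  also have "\<dots> = (\<Sum>l\<in>{..<k} \<inter> {l. l < r}. B $$ (i, \<sigma> l) * C $$ (l, j))"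
    by (simp add: sum.inter_restrict)
  also have "{..<k} \<inter> {l. l < r} = {..<r}" using \<open>r \<le> k\<close> by auto
  also have "(\<Sum>l<r. B $$ (i, \<sigma> l) * C $$ (l, j)) = (\<Sum>l<r. select_cols B r \<sigma> $$ (i, l) * C $$ (l, j))"
    using nB i by simp
  also have "\<dots> = (select_cols B r \<sigma> * C) $$ (i, j)"
    by (rule index_mult_mat_sum[symmetric, OF select_cols_carrier_mat[OF B] C i j])
  finally show "(select_cols B k s * ?Y) $$ (i, j) = (select_cols B r \<sigma> * C) $$ (i, j)" .
qed (use carrier_matD[OF B] C in auto)

lemma extend_inj_on_lessThan:
  fixes r k d :: nat
  assumes inj: "inj_on \<sigma> {..<r}" and sig: "\<sigma> ` {..<r} \<subseteq> {..<d}" and "r \<le> k" "k \<le> d"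
  obtains s where "inj_on s {..<k}" "s ` {..<k} \<subseteq> {..<d}" "\<And>l. l < r \<Longrightarrow> s l = \<sigma> l"
proof -
  have "card (\<sigma> ` {..<r}) = r" using card_image[OF inj] by simp
  then have "card {r..<k} \<le> card ({..<d} - \<sigma> ` {..<r})"
    using sig \<open>k \<le> d\<close> by (simp add: card_Diff_subset)
  then obtain f where f: "f ` {r..<k} \<subseteq> {..<d} - \<sigma> ` {..<r}" and finj: "inj_on f {r..<k}"
    using card_le_inj[of "{r..<k}" "{..<d} - \<sigma> ` {..<r}"] by auto
  define s where "s l = (if l < r then \<sigma> l else f l)" for l
  have "inj_on s {..<r}" using inj by (rule inj_on_cong[THEN iffD1, rotated]) (simp add: s_def)
  moreover have "inj_on s {r..<k}" using finj by (rule inj_on_cong[THEN iffD1, rotated]) (simp add: s_def)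
  moreover have img: "s ` {..<r} = \<sigma> ` {..<r}" "s ` {r..<k} = f ` {r..<k}" by (auto simp: s_def)
  moreover have "{..<r} - {r..<k} = {..<r}" "{r..<k} - {..<r} = {r..<k}" by auto
  ultimately have "inj_on s ({..<r} \<union> {r..<k})" using f by (auto simp: inj_on_Un)
  moreover have "{..<k} = {..<r} \<union> {r..<k}" using \<open>r \<le> k\<close> by auto
  moreover have "s ` ({..<r} \<union> {r..<k}) \<subseteq> {..<d}" unfolding image_Un img using f sig by auto
  ultimately have "inj_on s {..<k}" "s ` {..<k} \<subseteq> {..<d}" by simp_all
  then show ?thesis using that by (simp add: s_def)
qed

lemma exists_col_selection_le_approx_err:
  fixes A B :: "real mat"
  assumes A: "A \<in> carrier_mat n d" and B: "B \<in> carrier_mat n d"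
    and rk: "vec_space.rank n A \<le> k" and "1 \<le> k" "k \<le> d"
  shows "\<exists>s. inj_on s {..<k} \<and> s ` {..<k} \<subseteq> {..<d} \<and>
     frob_sq (B - (B * sel_mat d k s) * pinv (B * sel_mat d k s) * B) \<le> 4 * real k * real d * frob_sq (B - A)"
proof -
  obtain r \<sigma> c where "r \<le> k" and sig: "\<sigma> ` {..<r} \<subseteq> {..<d}" and inj: "inj_on \<sigma> {..<r}"
    and cb: "\<forall>j<d. \<forall>l<r. \<bar>c j l\<bar> \<le> (1::real)"
    and rep: "\<forall>i<n. \<forall>j<d. A $$ (i, j) = (\<Sum>l<r. A $$ (i, \<sigma> l) * c j l)"
    using exists_bounded_lincomb_selection[OF A rk] by blast
  obtain s where sinj: "inj_on s {..<k}" and ssub: "s ` {..<k} \<subseteq> {..<d}" and s: "\<And>l. l < r \<Longrightarrow> s l = \<sigma> l"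
    using extend_inj_on_lessThan[OF inj sig \<open>r \<le> k\<close> \<open>k \<le> d\<close>] by blast
  let ?C = "mat r d (\<lambda>(l, j). c j l)"
  let ?Y = "mat k d (\<lambda>(l, j). if l < r then ?C $$ (l, j) else 0)"
  have BP: "B * sel_mat d k s = select_cols B k s" by (rule mult_sel_mat[OF B ssub])
  have "frob_sq (B - (B * sel_mat d k s) * pinv (B * sel_mat d k s) * B) \<le> frob_sq (B - select_cols B k s * ?Y)"
    unfolding BP by (intro frob_sq_pinv_residual_le[OF select_cols_carrier_mat[OF B] B]) simp
  also have "select_cols B k s * ?Y = select_cols B r \<sigma> * ?C"
    by (rule select_cols_mult_zero_padded[OF B _ \<open>r \<le> k\<close> s]) simp
  also have "frob_sq (B - select_cols B r \<sigma> * ?C) \<le> 2 * (1 + real r * real d) * frob_sq (B - A)"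
    by (rule frob_sq_residual_bounded_lincomb_le[OF A B inj sig cb rep])
  also have "\<dots> \<le> 4 * real k * real d * frob_sq (B - A)"
  proof (rule mult_right_mono[OF _ frob_sq_nonneg])
    have "real r * real d \<le> real k * real d" using \<open>r \<le> k\<close> by (simp add: mult_right_mono)
    moreover have "1 \<le> real k * real d" using \<open>1 \<le> k\<close> \<open>k \<le> d\<close> mult_mono[of 1 "real k" 1 "real d"] by simp
    ultimately show "2 * (1 + real r * real d) \<le> 4 * real k * real d"
      by argo
  qed
  finally show ?thesis using sinj ssub by blast
qed

lemma le_mult_best_rank_err:
  fixes B :: "real mat"
  assumes c: "0 < c"
    and le: "\<And>A. A \<in> carrier_mat (dim_row B) (dim_col B) \<Longrightarrow> mrank A \<le> k \<Longrightarrow> x \<le> c * frob_sq (B - A)"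
  shows "x \<le> c * best_rank_err B k"
proof -
  let ?E = "{frob_sq (B - A) | A. A \<in> carrier_mat (dim_row B) (dim_col B) \<and> mrank A \<le> k}"
  have "0\<^sub>m (dim_row B) (dim_col B) \<in> carrier_mat (dim_row B) (dim_col B)"
    and "mrank (0\<^sub>m (dim_row B) (dim_col B)) \<le> k"
    by (simp_all add: mrank_def vec_space.rank_0I)
  then have "?E \<noteq> {}" by blast
  moreover have "x / c \<le> y" if "y \<in> ?E" for y
    using that le c by (auto simp: divide_le_eq mult.commute)
  ultimately have "x / c \<le> Inf ?E" by (rule cInf_greatest)
  then show ?thesis unfolding best_rank_err_def using c by (simp add: divide_le_eq mult.commute)
qed

lemma exists_col_selection_le_best_rank_err:
  fixes B :: "real mat"
  assumes B: "B \<in> carrier_mat n d" and "1 \<le> k" "k \<le> d"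
  shows "\<exists>s. inj_on s {..<k} \<and> s ` {..<k} \<subseteq> {..<d} \<and>
     frob_sq (B - (B * sel_mat d k s) * pinv (B * sel_mat d k s) * B) \<le> 4 * real k * real d * best_rank_err B k"
proof -
  define err where "err s = frob_sq (B - (B * sel_mat d k s) * pinv (B * sel_mat d k s) * B)" for s
  define S where "S = {s \<in> PiE {..<k} (\<lambda>_. {..<d}). inj_on s {..<k}}"
  have "finite (PiE {..<k} (\<lambda>_. {..<d}))" by (intro finite_PiE) auto
  then have "finite S" unfolding S_def by (rule rev_finite_subset) blast
  moreover have "restrict (\<lambda>l. l) {..<k} \<in> S" unfolding S_def using \<open>k \<le> d\<close> by (auto simp: inj_on_def)
  then have "S \<noteq> {}" by blast
  ultimately obtain s where s: "s \<in> S" and max: "\<And>t. t \<in> S \<Longrightarrow> - err t \<le> - err s"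
    using finite_obtain_max[where f = "\<lambda>t. - err t"] by metis
  have "err s \<le> 4 * real k * real d * best_rank_err B k"
  proof (rule le_mult_best_rank_err)
    fix A assume "A \<in> carrier_mat (dim_row B) (dim_col B)" "mrank A \<le> k"
    then have A: "A \<in> carrier_mat n d" and rk: "vec_space.rank n A \<le> k"
      using B by (auto simp: mrank_def)
    then obtain t where "inj_on t {..<k}" "t ` {..<k} \<subseteq> {..<d}"
      and t: "err t \<le> 4 * real k * real d * frob_sq (B - A)"
      using exists_col_selection_le_approx_err[OF A B rk \<open>1 \<le> k\<close> \<open>k \<le> d\<close>]
      unfolding err_def by blast
    then have "restrict t {..<k} \<in> S" unfolding S_def by (auto simp: inj_on_def)
    then have "- err (restrict t {..<k}) \<le> - err s" by (rule max)
    then have "err s \<le> err (restrict t {..<k})" by simp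
    also have "\<dots> = err t" unfolding err_def sel_mat_restrict ..
    finally show "err s \<le> 4 * real k * real d * frob_sq (B - A)" using t by simp
  qed (use \<open>1 \<le> k\<close> \<open>k \<le> d\<close> in simp)
  moreover have "s ` {..<k} \<subseteq> {..<d}" and "inj_on s {..<k}"
    using s unfolding S_def by (auto simp: PiE_def Pi_def)
  ultimately show ?thesis unfolding err_def by blast
qed

theorem lemma5p5:
  "\<exists>C::real. \<forall>k d n. \<forall>B::real mat.
     1 \<le> k \<longrightarrow> k < d \<longrightarrow> 1 \<le> n \<longrightarrow> B \<in> carrier_mat n d \<longrightarrow>
     (\<exists>(s::nat \<Rightarrow> nat) (P::real mat).
        inj_on s {..<k} \<and> s ` {..<k} \<subseteq> {..<d} \<and>
        P \<in> carrier_mat d k \<and> (\<forall>j<k. col P j = unit_vec d (s j)) \<and>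
        frob_sq (B - (B * P) * pinv (B * P) * B)
          \<le> C * real k * real d * best_rank_err B k)"
proof (intro exI[of _ 4] allI impI)
  fix k d n :: nat and B :: "real mat"
  assume "1 \<le> k" "k < d" "1 \<le> n" and B: "B \<in> carrier_mat n d"
  then obtain s where "inj_on s {..<k}" and ssub: "s ` {..<k} \<subseteq> {..<d}"
    and "frob_sq (B - (B * sel_mat d k s) * pinv (B * sel_mat d k s) * B)
      \<le> 4 * real k * real d * best_rank_err B k"
    using exists_col_selection_le_best_rank_err[OF B \<open>1 \<le> k\<close> less_imp_le[OF \<open>k < d\<close>]] by blast
  moreover have "\<forall>j<k. col (sel_mat d k s) j = unit_vec d (s j)"
    using ssub by (auto intro: col_sel_mat)
  ultimately show "\<exists>s P. inj_on s {..<k} \<and> s ` {..<k} \<subseteq> {..<d} \<and> P \<in> carrier_mat d k \<and>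
      (\<forall>j<k. col P j = unit_vec d (s j)) \<and>
      frob_sq (B - B * P * pinv (B * P) * B) \<le> 4 * real k * real d * best_rank_err B k"
    using sel_mat_carrier_mat[of d k s] by blast
qed

end
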